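(* Let $n\ge2$ be even and let $\mathcal{D}_{S_1},\mathcal{D}_{S_2}\subseteq\mathcal{D}_{[n]}\setminus\{n\}$. If $\mathrm{Spec}(\mathrm{ICG}(n,\mathcal{D}_{S_1}))=\mathrm{Spec}(\mathrm{ICG}(n,\mathcal{D}_{S_2}))$, then $n/2\notin\mathcal{D}_{S_1}\triangle\mathcal{D}_{S_2}$ (symmetric difference).
   Context: Identify $\mathbb{Z}_n$ with $[n]=\{1,\dots,n\}$. For a divisor $d$ of $n$, $G_n(d)=\{j\in[n]:\gcd(j,n)=d\}$; $\mathcal{D}_{[n]}$ is the set of positive divisors of $n$. For $\mathcal{D}\subseteq\mathcal{D}_{[n]}\setminus\{n\}$, $\mathrm{ICG}(n,\mathcal{D})=\mathrm{Cay}(\mathbb{Z}_n,S)$ with $S=\bigcup_{d\in\mathcal{D}}G_n(d)$, and $\mathcal{D}=\mathcal{D}_S$. $\mathrm{Spec}$ is the multiset of adjacency eigenvalues. *)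

theory Defs
  imports "Jordan_Normal_Form.Char_Poly"
begin

text \<open>Z_n is identified with [n] = {1..n}; residue 0 corresponds to n.\<close>

definition G :: "nat \<Rightarrow> nat \<Rightarrow> nat set" where
  "G n d = {j \<in> {1..n}. gcd j n = d}"

definition divisors :: "nat \<Rightarrow> nat set" where
  "divisors n = {d. 0 < d \<and> d dvd n}"

definition ICG_S :: "nat \<Rightarrow> nat set \<Rightarrow> nat set" where
  "ICG_S n D = (\<Union>d\<in>D. G n d)"

definition to_n :: "nat \<Rightarrow> nat \<Rightarrow> nat" where
  "to_n n r = (if r mod n = 0 then n else r mod n)"

text \<open>Adjacency matrix of Cay(Z_n, S): rows/columns indexed by 0..n-1
  (vertex i stands for residue i), i adjacent to j iff j - i is in S.\<close>
definition cay_adj :: "nat \<Rightarrow> nat set \<Rightarrow> complex mat" where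
  "cay_adj n S = mat n n (\<lambda>(i, j). if to_n n (j + n - i) \<in> S then 1 else 0)"

definition ICG_adj :: "nat \<Rightarrow> nat set \<Rightarrow> complex mat" where
  "ICG_adj n D = cay_adj n (ICG_S n D)"

definition Spec :: "complex mat \<Rightarrow> complex multiset" where
  "Spec A = (THE M. char_poly A = (\<Prod>a\<in>#M. [:- a, 1:]))"

end

(*
  The trace of A^2 is the sum of the squared eigenvalues (triangularise A by Schur), so
  cospectral graphs have equal tr(A^2). For an undirected Cayley graph on Z_n with connection
  set S this trace is n |S|, hence cospectral graphs ICG(n, D1) and ICG(n, D2) have connection
  sets of equal size. For even n the involution s -> n - s pairs off all elements of the
  connection set except n/2, so its size is odd exactly when n/2 is in D.
*)

theory Submission
  imports Defs "Jordan_Normal_Form.Schur_Decomposition"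
begin

lemma order_prod_linear_factors:
  "Polynomial.order a (\<Prod>b\<in>#M. [:-b, 1:]) = count M (a :: complex)"
proof (induction M)
  case empty
  then show ?case by simp
next
  case (add x M)
  have "(\<Prod>b\<in>#M. [:-b, 1:]) \<noteq> (0 :: complex poly)"
    by (auto simp: prod_mset_zero_iff)
  then have "Polynomial.order a ([:-x, 1:] * (\<Prod>b\<in>#M. [:-b, 1:]))
      = Polynomial.order a [:-x, 1:] + Polynomial.order a (\<Prod>b\<in>#M. [:-b, 1:])"
    by (intro Polynomial.order_mult) (metis mult_eq_0_iff pCons_eq_0_iff one_neq_zero)
  moreover have "Polynomial.order a [:-x, 1:] = (if a = x then 1 else 0)"
    using order_power_n_n[of a 1] by (auto intro: order_0I)
  ultimately show ?case
    using add by simp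
qed

lemma Spec_eq_mset:
  assumes "char_poly A = (\<Prod>a\<leftarrow>es. [:-a, 1:])"
  shows "Spec A = mset es"
proof -
  have char_poly: "char_poly A = (\<Prod>b\<in>#mset es. [:-b, 1:])"
    using assms by (metis mset_map prod_mset_prod_list)
  have "M = mset es" if "char_poly A = (\<Prod>b\<in>#M. [:-b, 1:])" for M
    using that char_poly by (metis multiset_eqI order_prod_linear_factors)
  then show ?thesis
    unfolding Spec_def using char_poly by (intro the_equality) auto
qed

definition trace :: "'a :: comm_semiring_0 mat \<Rightarrow> 'a" where
  "trace A = (\<Sum>i<dim_row A. A $$ (i, i))"

lemma trace_mult:
  fixes X Y :: "'a :: comm_semiring_0 mat"
  assumes "X \<in> carrier_mat n m" "Y \<in> carrier_mat m n"
  shows "trace (X * Y) = (\<Sum>i<n. \<Sum>k<m. X $$ (i, k) * Y $$ (k, i))"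
  using assms unfolding trace_def
  by (auto simp: scalar_prod_def lessThan_atLeast0 intro!: sum.cong)

lemma trace_mult_comm:
  fixes X Y :: "'a :: comm_semiring_0 mat"
  assumes "X \<in> carrier_mat n m" "Y \<in> carrier_mat m n"
  shows "trace (X * Y) = trace (Y * X)"
  using assms by (simp add: trace_mult sum.swap[of _ "{..<n}"] mult.commute)

lemma trace_similar:
  fixes A B :: "'a :: comm_ring_1 mat"
  assumes "A \<in> carrier_mat n n" "similar_mat_wit A B P Q"
  shows "trace A = trace B"
proof -
  note wit = similar_mat_witD2[OF assms]
  have "trace A = trace ((P * B) * Q)"
    using wit by simp
  also have "\<dots> = trace (Q * (P * B))"
    using wit by (intro trace_mult_comm[of _ n n]) auto
  also have "Q * (P * B) = (Q * P) * B"
    using wit by (metis assoc_mult_mat)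
  finally show ?thesis
    using wit by simp
qed

lemma trace_mult_upper_triangular:
  fixes B C :: "'a :: comm_semiring_0 mat"
  assumes "B \<in> carrier_mat n n" "C \<in> carrier_mat n n"
    and "upper_triangular B" "upper_triangular C"
  shows "trace (B * C) = (\<Sum>i<n. B $$ (i, i) * C $$ (i, i))"
proof -
  have "trace (B * C) = (\<Sum>i<n. \<Sum>k<n. B $$ (i, k) * C $$ (k, i))"
    using assms by (simp add: trace_mult)
  also have "\<dots> = (\<Sum>i<n. \<Sum>k\<in>{i}. B $$ (i, k) * C $$ (k, i))"
  proof (rule sum.cong[OF refl])
    fix i assume i: "i \<in> {..<n}"
    moreover have "B $$ (i, k) * C $$ (k, i) = 0" if "k \<in> {..<n} - {i}" for k
      using assms i that by (cases "k < i") (auto simp: upper_triangularD)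
    ultimately show "(\<Sum>k<n. B $$ (i, k) * C $$ (k, i)) = (\<Sum>k\<in>{i}. B $$ (i, k) * C $$ (k, i))"
      by (intro sum.mono_neutral_right) auto
  qed
  finally show ?thesis
    by simp
qed

lemma sum_squares_Spec_eq_trace:
  assumes A: "A \<in> carrier_mat n n"
  shows "(\<Sum>x\<in>#Spec A. x ^ 2) = trace (A * A)"
proof -
  obtain es where es: "char_poly A = (\<Prod>a\<leftarrow>es. [:-a, 1:])"
    using char_poly_factorized[OF A] by blast
  obtain B P Q where schur: "schur_decomposition A es = (B, P, Q)"
    by (cases "schur_decomposition A es") auto
  from schur_decomposition[OF A es schur]
  have sim: "similar_mat_wit A B P Q" and upper: "upper_triangular B" and diag: "diag_mat B = es"
    by auto
  have B: "B \<in> carrier_mat n n"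
    using similar_mat_witD2[OF A sim] by simp
  have "similar_mat_wit (A ^\<^sub>m 2) (B ^\<^sub>m 2) P Q"
    by (rule similar_mat_wit_pow[OF sim])
  moreover have "A ^\<^sub>m 2 = A * A" "B ^\<^sub>m 2 = B * B"
    using A B by (simp_all add: numeral_2_eq_2)
  ultimately have "trace (A * A) = trace (B * B)"
    using A by (intro trace_similar[of _ n]) auto
  also have "\<dots> = (\<Sum>i<n. B $$ (i, i) ^ 2)"
    using B upper by (simp add: trace_mult_upper_triangular power2_eq_square)
  also have "\<dots> = (\<Sum>x\<leftarrow>es. x ^ 2)"
    using B by (simp add: diag[symmetric] diag_mat_def sum_list_distinct_conv_sum_set
        atLeast0LessThan comp_def)
  also have "\<dots> = (\<Sum>x\<in>#Spec A. x ^ 2)"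
    by (metis Spec_eq_mset[OF es] mset_map sum_mset_sum_list)
  finally show ?thesis ..
qed

lemma gcd_eq_if_dvd_add:
  fixes a b n :: nat
  assumes "n dvd a + b"
  shows "gcd a n = gcd b n"
proof -
  have "gcd y n dvd x" if "n dvd x + y" for x y :: nat
  proof -
    have "gcd y n dvd x + y"
      using that by (rule dvd_trans[OF gcd_dvd2])
    then show ?thesis
      by (simp add: dvd_add_left_iff)
  qed
  then have "gcd b n dvd a" "gcd a n dvd b"
    using assms by (simp_all add: add.commute)
  then show ?thesis
    by (simp add: dvd_antisym)
qed

lemma to_n_in_range: "0 < n \<Longrightarrow> to_n n r \<in> {1..n}"
  unfolding to_n_def by simp

lemma to_n_eq_iff:
  assumes "0 < n"
  shows "to_n n a = to_n n b \<longleftrightarrow> a mod n = b mod n"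
proof -
  have "a mod n \<noteq> n" "b mod n \<noteq> n"
    using assms by (metis less_irrefl mod_less_divisor)+
  then show ?thesis
    unfolding to_n_def by auto
qed

lemma gcd_to_n: "gcd (to_n n r) n = gcd r n"
proof (cases "r mod n = 0")
  case True
  then show ?thesis
    by (simp add: to_n_def dvd_eq_mod_eq_0 gcd_nat.absorb2)
next
  case False
  then show ?thesis
    unfolding to_n_def by (metis gcd.commute gcd_red_nat)
qed

lemma bij_betw_to_n_shift:
  assumes "i < n"
  shows "bij_betw (\<lambda>j. to_n n (j + n - i)) {..<n} {1..n}"
proof -
  let ?f = "\<lambda>j. to_n n (j + n - i)"
  have "inj_on ?f {..<n}"
  proof (rule inj_onI)
    fix j k assume "j \<in> {..<n}" "k \<in> {..<n}" "?f j = ?f k"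
    then have "(j + n - i) mod n = (k + n - i) mod n"
      using assms by (simp add: to_n_eq_iff)
    then have "(j + n - i + i) mod n = (k + n - i + i) mod n"
      by (metis mod_add_left_eq)
    then show "j = k"
      using assms \<open>j \<in> {..<n}\<close> \<open>k \<in> {..<n}\<close> by simp
  qed
  moreover have "?f ` {..<n} \<subseteq> {1..n}"
    using assms to_n_in_range[of n] by auto
  moreover have "card (?f ` {..<n}) = card {1..n}"
    using calculation(1) by (simp add: card_image)
  ultimately show ?thesis
    unfolding bij_betw_def by (simp add: card_subset_eq)
qed

lemma cay_adj_carrier: "cay_adj n S \<in> carrier_mat n n"
  unfolding cay_adj_def by simp

lemma cay_adj_entry:
  "i < n \<Longrightarrow> j < n \<Longrightarrow> cay_adj n S $$ (i, j) = (if to_n n (j + n - i) \<in> S then 1 else 0)"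
  unfolding cay_adj_def by simp

lemma card_cay_adj_row:
  assumes "S \<subseteq> {1..n}" "i < n"
  shows "card {j \<in> {..<n}. to_n n (j + n - i) \<in> S} = card S"
proof -
  let ?f = "\<lambda>j. to_n n (j + n - i)" and ?row = "{j \<in> {..<n}. to_n n (j + n - i) \<in> S}"
  have inj: "inj_on ?f {..<n}" and img: "?f ` {..<n} = {1..n}"
    using bij_betw_to_n_shift[OF assms(2)] unfolding bij_betw_def by auto
  have "?f ` ?row = ?f ` {..<n} \<inter> S"
    by blast
  also have "\<dots> = S"
    using img assms(1) by blast
  finally have "card (?f ` ?row) = card S"
    by simp
  moreover have "inj_on ?f ?row"
    by (rule inj_on_subset[OF inj]) auto
  ultimately show ?thesis
    by (simp add: card_image)
qed

text \<open>The hypothesis \<open>neg_closed\<close> says \<open>S = -S\<close> in \<open>Z_n\<close>, i.e. the Cayley graph is undirected.\<close>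

lemma trace_square_cay_adj:
  assumes "S \<subseteq> {1..n}"
    and neg_closed: "\<And>a b. n dvd a + b \<Longrightarrow> to_n n a \<in> S \<longleftrightarrow> to_n n b \<in> S"
  shows "trace (cay_adj n S * cay_adj n S) = of_nat (n * card S)"
proof -
  let ?A = "cay_adj n S"
  have "trace (?A * ?A) = (\<Sum>i<n. \<Sum>j<n. ?A $$ (i, j) * ?A $$ (j, i))"
    by (rule trace_mult[OF cay_adj_carrier cay_adj_carrier])
  also have "\<dots> = (\<Sum>i<n. \<Sum>j<n. if to_n n (j + n - i) \<in> S then 1 else 0)"
  proof (intro sum.cong refl)
    fix i j assume ij: "i \<in> {..<n}" "j \<in> {..<n}"
    then have "(j + n - i) + (i + n - j) = n * 2"
      by simp
    then have "to_n n (i + n - j) \<in> S \<longleftrightarrow> to_n n (j + n - i) \<in> S"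
      using neg_closed by (metis dvd_triv_left)
    then show "?A $$ (i, j) * ?A $$ (j, i) = (if to_n n (j + n - i) \<in> S then 1 else 0)"
      using ij by (simp add: cay_adj_entry)
  qed
  also have "\<dots> = (\<Sum>i<n. of_nat (card S))"
  proof (intro sum.cong refl)
    fix i assume "i \<in> {..<n}"
    moreover have "{..<n} \<inter> {j. to_n n (j + n - i) \<in> S} = {j \<in> {..<n}. to_n n (j + n - i) \<in> S}"
      by blast
    ultimately show "(\<Sum>j<n. if to_n n (j + n - i) \<in> S then 1 else 0) = of_nat (card S)"
      using card_cay_adj_row[OF assms(1), of i] by (simp add: sum.If_cases)
  qed
  finally show ?thesis
    by simp
qed

lemma odd_card_symmetric_iff:
  fixes n :: nat and S :: "nat set"
  assumes "S \<subseteq> {1..<n}" "even n" and symmetric: "\<And>s. s \<in> S \<Longrightarrow> n - s \<in> S"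
  shows "odd (card S) \<longleftrightarrow> n div 2 \<in> S"
proof -
  obtain h where n: "n = 2 * h"
    using assms(2) by (rule evenE)
  let ?L = "{s \<in> S. s < h}" and ?R = "{s \<in> S. h < s}"
  have fin: "finite S"
    using assms(1) by (rule finite_subset) simp
  have "?R = (\<lambda>s. n - s) ` ?L"
  proof (intro equalityI subsetI)
    fix r assume r: "r \<in> ?R"
    then have "r < n"
      using assms(1) by auto
    then have "n - r \<in> ?L" "r = n - (n - r)"
      using r symmetric[of r] n by auto
    then show "r \<in> (\<lambda>s. n - s) ` ?L"
      by blast
  next
    fix r assume "r \<in> (\<lambda>s. n - s) ` ?L"
    then obtain s where "s \<in> S" "s < h" "r = n - s"
      by blast
    then show "r \<in> ?R"
      using symmetric[of s] n by auto
  qed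
  moreover have "inj_on (\<lambda>s. n - s) ?L"
    by (rule inj_onI) (use n in auto)
  ultimately have "card ?R = card ?L"
    by (simp add: card_image)
  moreover have "card S = card ?L + card ?R + card (S \<inter> {h})"
  proof -
    have "S = (?L \<union> ?R) \<union> (S \<inter> {h})"
      by auto
    moreover have "card (?L \<union> ?R) = card ?L + card ?R"
      using fin by (intro card_Un_disjoint) auto
    moreover have "card ((?L \<union> ?R) \<union> (S \<inter> {h})) = card (?L \<union> ?R) + card (S \<inter> {h})"
      using fin by (intro card_Un_disjoint) auto
    ultimately show ?thesis
      by simp
  qed
  ultimately show ?thesis
    using n by (cases "h \<in> S") auto
qed

lemma ICG_S_eq: "ICG_S n D = {s \<in> {1..n}. gcd s n \<in> D}"
  unfolding ICG_S_def G_def by auto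

lemma to_n_mem_ICG_S: "0 < n \<Longrightarrow> to_n n r \<in> ICG_S n D \<longleftrightarrow> gcd r n \<in> D"
  using to_n_in_range[of n r] by (auto simp: ICG_S_eq gcd_to_n)

lemma ICG_adj_carrier: "ICG_adj n D \<in> carrier_mat n n"
  unfolding ICG_adj_def by (rule cay_adj_carrier)

lemma trace_square_ICG_adj:
  assumes "0 < n"
  shows "trace (ICG_adj n D * ICG_adj n D) = of_nat (n * card (ICG_S n D))"
  unfolding ICG_adj_def
proof (rule trace_square_cay_adj)
  show "ICG_S n D \<subseteq> {1..n}"
    by (auto simp: ICG_S_eq)
  show "to_n n a \<in> ICG_S n D \<longleftrightarrow> to_n n b \<in> ICG_S n D" if "n dvd a + b" for a b
    using assms gcd_eq_if_dvd_add[OF that] by (simp add: to_n_mem_ICG_S)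
qed

lemma odd_card_ICG_S_iff:
  assumes "0 < n" "even n" "D \<subseteq> divisors n - {n}"
  shows "odd (card (ICG_S n D)) \<longleftrightarrow> n div 2 \<in> D"
proof -
  have "ICG_S n D \<subseteq> {1..<n}"
    using assms(3) by (auto simp: ICG_S_eq)
  moreover have "n - s \<in> ICG_S n D" if "s \<in> ICG_S n D" for s
    using that assms(3) gcd_eq_if_dvd_add[of n "n - s" s] by (auto simp: ICG_S_eq)
  moreover have "n div 2 \<in> ICG_S n D \<longleftrightarrow> n div 2 \<in> D"
    using assms(1,2) by (auto simp: ICG_S_eq elim!: evenE)
  ultimately show ?thesis
    using assms(2) odd_card_symmetric_iff by blast
qed

theorem lemma3p8:
  fixes n :: nat and D1 D2 :: "nat set"
  assumes "n \<ge> 2" and "even n"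
    and "D1 \<subseteq> divisors n - {n}" and "D2 \<subseteq> divisors n - {n}"
    and "Spec (ICG_adj n D1) = Spec (ICG_adj n D2)"
  shows "n div 2 \<notin> (D1 - D2) \<union> (D2 - D1)"
proof -
  have n: "0 < n"
    using assms(1) by simp
  have "(\<Sum>x\<in>#Spec (ICG_adj n D). x ^ 2) = of_nat (n * card (ICG_S n D))" for D
    using sum_squares_Spec_eq_trace[OF ICG_adj_carrier] trace_square_ICG_adj[OF n] by simp
  then have "of_nat (n * card (ICG_S n D1)) = (of_nat (n * card (ICG_S n D2)) :: complex)"
    using assms(5) by metis
  then have "card (ICG_S n D1) = card (ICG_S n D2)"
    using n by (simp only: of_nat_eq_iff) simp
  then show ?thesis
    using odd_card_ICG_S_iff[OF n assms(2,3)] odd_card_ICG_S_iff[OF n assms(2,4)] by auto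
qed

end
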